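(* Let $n\ge2$ and let $F_2$ be the uniform distribution on $[0,\frac2n]$ (cumulative distribution function $F_2(x)=\frac n2 x$ for $x\in[0,\frac2n]$, $F_2(x)=1$ for $x\in(\frac2n,1]$). Let $s(v)=\frac{81}{2}\cdot\frac{v}{2-3v}$ and let $h(x,y,z)=s(|x-y|+|y-z|+|z-x|)$, a probability density on $[0,\tfrac13]^3$. Define random numbers $b_1,\dots,b_n$ as follows. Case 1: $n=2m$ even. Draw $b_1$ from $F_2$ and set $b_i=b_1$ and $b_{m+i}=\frac2n-b_1$ for $i=1,\dots,m$. Case 2: $n=2m+1$ odd. Draw $b_1$ from $F_2$ and set $b_i=b_1$ and $b_{m-1+i}=\frac2n-b_1$ for $i=1,\dots,m-1$; independently draw $(x,y,z)$ with density $h$ and set $b_{2m-1}=\frac3n(x-y+\frac13)$, $b_{2m}=\frac3n(y-z+\frac13)$, $b_{2m+1}=\frac3n(z-x+\frac13)$. Then $\sum_{i=1}^n b_i=1$ and each $b_i$ has distribution $F_2$. *)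

theory Defs
  imports "HOL-Probability.Probability"
begin

definition F2 :: "nat \<Rightarrow> real measure" where
  "F2 n = uniform_measure lborel {0..2 / real n}"

definition s_fun :: "real \<Rightarrow> real" where
  "s_fun v = 81 / 2 * (v / (2 - 3 * v))"

definition h_dens :: "real \<Rightarrow> real \<Rightarrow> real \<Rightarrow> real" where
  "h_dens x y z =
     (if x \<in> {0..1/3} \<and> y \<in> {0..1/3} \<and> z \<in> {0..1/3}
      then s_fun (\<bar>x - y\<bar> + \<bar>y - z\<bar> + \<bar>z - x\<bar>) else 0)"

definition H_dist :: "(real \<times> real \<times> real) measure" where
  "H_dist = density lborel (\<lambda>(x, y, z). ennreal (h_dens x y z))"

text \<open>The construction of b_1..b_n from b_1 = t and (x,y,z), indices 1..n.\<close>
definition bseq :: "nat \<Rightarrow> real \<Rightarrow> real \<times> real \<times> real \<Rightarrow> nat \<Rightarrow> real" where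
  "bseq n t p i =
    (let m = n div 2; (x, y, z) = p in
     if even n then (if i \<le> m then t else 2 / real n - t)
     else if i \<le> m - 1 then t
     else if i \<le> 2 * m - 2 then 2 / real n - t
     else if i = 2 * m - 1 then 3 / real n * (x - y + 1/3)
     else if i = 2 * m then 3 / real n * (y - z + 1/3)
     else 3 / real n * (z - x + 1/3))"

end

theory Submission
  imports Defs
begin

(* The sum is bookkeeping: the entries equal to b_1 and to 2/n - b_1 pair up to 2/n each, and
   the three differences x - y, y - z, z - x cancel, so the last three entries add up to 3/n.

   For the laws: 2/n - b_1 is uniform on [0, 2/n] by reflection, and each of the last three
   entries is the affine image u -> 3/n (u + 1/3) of a cyclic difference of (x, y, z). The
   density h is invariant under the cyclic rotation of coordinates, so it suffices that x - y
   is uniform on [-1/3, 1/3] under h. Writing x = y + d1 and z = y + d2, h depends only on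
   v = |d1| + |d2| + |d2 - d1|, and the line of such points meets the cube in a segment of
   length 1/3 - v/2; integrating out y leaves s v (1/3 - v/2) = 27 v / 4, and integrating
   that over d2 gives the constant 3/2 for |d1| < 1/3. *)

lemma sets_borel_real_affine_image:
  fixes S :: "real set" and c t :: real
  assumes "S \<in> sets borel" "c \<noteq> 0"
  shows "(\<lambda>x. t + c * x) ` S \<in> sets borel"
proof -
  have "(\<lambda>x. t + c * x) ` S = (\<lambda>y. (y - t) / c) -` S"
    using assms(2) by (force simp: field_simps)
  also have "\<dots> \<in> sets borel"
    by (rule measurable_sets_borel[OF _ assms(1)]) measurable
  finally show ?thesis .
qed

lemma emeasure_lborel_real_affine_image:
  fixes S :: "real set" and c t :: real
  assumes S[measurable]: "S \<in> sets borel" and c: "c \<noteq> 0"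
  shows "emeasure lborel ((\<lambda>x. t + c * x) ` S) = ennreal \<bar>c\<bar> * emeasure lborel S"
proof -
  have [measurable]: "(\<lambda>x. t + c * x) ` S \<in> sets borel"
    using sets_borel_real_affine_image[OF S c] .
  have "emeasure lborel ((\<lambda>x. t + c * x) ` S)
      = \<bar>c\<bar> * (\<integral>\<^sup>+x. indicator ((\<lambda>x. t + c * x) ` S) (t + c * x) \<partial>lborel)"
    using nn_integral_real_affine[of "indicator ((\<lambda>x. t + c * x) ` S)" c t] c by simp
  also have "(\<lambda>x. indicator ((\<lambda>x. t + c * x) ` S) (t + c * x) :: ennreal) = indicator S"
  proof
    fix x
    show "indicator ((\<lambda>x. t + c * x) ` S) (t + c * x) = (indicator S x :: ennreal)"
      using c by (auto simp: indicator_def)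
  qed
  finally show ?thesis by simp
qed

lemma distr_uniform_measure_real_affine:
  fixes A :: "real set" and c t :: real
  assumes A[measurable]: "A \<in> sets borel" and c: "c \<noteq> 0"
  shows "distr (uniform_measure lborel A) borel (\<lambda>x. t + c * x)
    = uniform_measure lborel ((\<lambda>x. t + c * x) ` A)"
proof (rule measure_eqI)
  fix B assume "B \<in> sets (distr (uniform_measure lborel A) borel (\<lambda>x. t + c * x))"
  then have B[measurable]: "B \<in> sets borel" by simp
  have [measurable]: "(\<lambda>x. t + c * x) -` B \<in> sets borel"
    by (rule measurable_sets_borel[OF _ B]) measurable
  have image_eq: "(\<lambda>x. t + c * x) ` A \<inter> B = (\<lambda>x. t + c * x) ` (A \<inter> (\<lambda>x. t + c * x) -` B)"
    by auto
  have "emeasure (distr (uniform_measure lborel A) borel (\<lambda>x. t + c * x)) B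
      = emeasure lborel (A \<inter> (\<lambda>x. t + c * x) -` B) / emeasure lborel A"
    by (simp add: emeasure_distr)
  also have "\<dots> = ennreal \<bar>c\<bar> * emeasure lborel (A \<inter> (\<lambda>x. t + c * x) -` B)
      / (ennreal \<bar>c\<bar> * emeasure lborel A)"
    using c by (simp add: divide_mult_eq mult.commute[of "ennreal \<bar>c\<bar>"])
  also have "\<dots> = emeasure lborel ((\<lambda>x. t + c * x) ` A \<inter> B) / emeasure lborel ((\<lambda>x. t + c * x) ` A)"
  proof -
    have "A \<inter> (\<lambda>x. t + c * x) -` B \<in> sets borel"
      by measurable
    then show ?thesis
      unfolding image_eq
      by (simp only: emeasure_lborel_real_affine_image[OF _ c] A)
  qed
  also have "\<dots> = emeasure (uniform_measure lborel ((\<lambda>x. t + c * x) ` A)) B"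
    by (rule emeasure_uniform_measure[symmetric]) (use sets_borel_real_affine_image[OF A c] in auto)
  finally show "emeasure (distr (uniform_measure lborel A) borel (\<lambda>x. t + c * x)) B
      = emeasure (uniform_measure lborel ((\<lambda>x. t + c * x) ` A)) B" .
qed simp

lemma F2_reflect:
  assumes "n > 0"
  shows "distr (F2 n) borel (\<lambda>t. 2 / real n - t) = F2 n"
proof -
  have "distr (F2 n) borel (\<lambda>t. 2 / real n - t)
      = distr (uniform_measure lborel {0..2 / real n}) borel (\<lambda>t. 2 / real n + (-1) * t)"
    unfolding F2_def by (rule distr_cong) auto
  also have "\<dots> = uniform_measure lborel ((\<lambda>t. 2 / real n + (-1) * t) ` {0..2 / real n})"
    by (rule distr_uniform_measure_real_affine) auto
  also have "(\<lambda>t. 2 / real n + (-1) * t) ` {0..2 / real n} = {0..2 / real n}"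
    using image_affinity_atLeastAtMost[of "-1" "2 / real n" 0 "2 / real n"] by (simp add: add.commute)
  finally show ?thesis
    unfolding F2_def .
qed

lemma F2_eq_distr_uniform_measure:
  assumes "n > 0"
  shows "distr (uniform_measure lborel {-1/3..1/3}) borel (\<lambda>u. 3 / real n * (u + 1/3)) = F2 n"
proof -
  have "distr (uniform_measure lborel {-1/3..1/3}) borel (\<lambda>u. 3 / real n * (u + 1/3))
      = distr (uniform_measure lborel {-1/3..1/3}) borel (\<lambda>u. 1 / real n + 3 / real n * u)"
    using assms by (intro distr_cong) (auto simp: field_simps)
  also have "\<dots> = uniform_measure lborel ((\<lambda>u. 1 / real n + 3 / real n * u) ` {-1/3..1/3})"
    using assms by (intro distr_uniform_measure_real_affine) auto
  also have "(\<lambda>u. 1 / real n + 3 / real n * u) ` {-1/3..1/3} = {0..2 / real n}"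
    using image_affinity_atLeastAtMost[of "3 / real n" "1 / real n" "-1/3" "1/3"] assms
    by (simp add: add.commute field_simps)
  finally show ?thesis
    unfolding F2_def .
qed

lemma h_dens_measurable[measurable]:
  assumes [measurable]: "f \<in> borel_measurable M" "g \<in> borel_measurable M" "k \<in> borel_measurable M"
  shows "(\<lambda>x. h_dens (f x) (g x) (k x)) \<in> borel_measurable M"
  unfolding h_dens_def s_fun_def by measurable

(* The argument of s at (y + d1, y, y + d2); it is twice the diameter of {0, d1, d2}. *)
definition spread :: "real \<Rightarrow> real \<Rightarrow> real" where
  "spread d1 d2 = \<bar>d1\<bar> + \<bar>d2\<bar> + \<bar>d2 - d1\<bar>"

lemma spread_measurable[measurable]:
  assumes [measurable]: "f \<in> borel_measurable M" "g \<in> borel_measurable M"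
  shows "(\<lambda>x. spread (f x) (g x)) \<in> borel_measurable M"
  unfolding spread_def by measurable

(* s v * (1/3 - v/2), the h-mass of a line {(y + d1, y, y + d2)} with spread v. *)
definition fiber_mass :: "real \<Rightarrow> real" where
  "fiber_mass v = (if v < 2/3 then 27/4 * v else 0)"

lemma fiber_mass_measurable[measurable]:
  assumes [measurable]: "f \<in> borel_measurable M"
  shows "(\<lambda>x. fiber_mass (f x)) \<in> borel_measurable M"
  unfolding fiber_mass_def by measurable

lemma nn_integral_h_dens_line:
  "(\<integral>\<^sup>+y. ennreal (h_dens (y + d1) y (y + d2)) \<partial>lborel)
     = ennreal (fiber_mass (spread d1 d2))"
proof -
  define lo where "lo = max 0 (max (-d1) (-d2))"
  define hi where "hi = min (1/3) (min (1/3 - d1) (1/3 - d2))"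
  have length: "hi - lo = 1/3 - spread d1 d2 / 2"
    unfolding lo_def hi_def spread_def by (auto split: abs_split simp: max_def min_def field_simps)
  have "h_dens (y + d1) y (y + d2) = s_fun (spread d1 d2) * indicator {lo..hi} y" for y
    unfolding h_dens_def lo_def hi_def spread_def by (auto simp: indicator_def abs_minus_commute)
  then have "(\<integral>\<^sup>+y. ennreal (h_dens (y + d1) y (y + d2)) \<partial>lborel)
      = (\<integral>\<^sup>+y. ennreal (s_fun (spread d1 d2)) * indicator {lo..hi} y \<partial>lborel)"
    by (intro nn_integral_cong) (simp add: indicator_def)
  also have "\<dots> = ennreal (s_fun (spread d1 d2)) * emeasure lborel {lo..hi}"
    by (simp add: nn_integral_cmult_indicator)
  also have "\<dots> = ennreal (fiber_mass (spread d1 d2))"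
  proof (cases "spread d1 d2 < 2/3")
    case True
    have "s_fun (spread d1 d2) \<ge> 0"
      using True unfolding s_fun_def spread_def by (auto intro!: divide_nonneg_pos)
    then have "ennreal (s_fun (spread d1 d2)) * emeasure lborel {lo..hi}
        = ennreal (s_fun (spread d1 d2) * (hi - lo))"
      using True length by (simp add: ennreal_mult)
    also have "s_fun (spread d1 d2) * (hi - lo) = 27/4 * spread d1 d2"
      using True unfolding length s_fun_def by (simp add: field_simps)
    finally show ?thesis
      using True by (simp add: fiber_mass_def)
  next
    case False
    then show ?thesis
      using length by (simp add: emeasure_lborel_Icc_eq fiber_mass_def)
  qed
  finally show ?thesis .
qed

lemma nn_integral_spread_nonneg:
  fixes w :: real
  assumes "0 \<le> w" "w < 1/3"
  shows "(\<integral>\<^sup>+e. ennreal (fiber_mass (spread w e)) \<partial>lborel) = ennreal (3/2)"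
proof -
  let ?left = "\<lambda>e. ennreal (27/2 * (w - e)) * indicator {w - 1/3..0} e"
  let ?middle = "\<lambda>e. ennreal (27/2 * w) * indicator {0..w} e"
  let ?right = "\<lambda>e. ennreal (27/2 * e) * indicator {w..1/3} e"
  have "AE e in lborel. ennreal (fiber_mass (spread w e))
      = ?left e + ?middle e + ?right e"
    using AE_lborel_singleton[of "w - 1/3"] AE_lborel_singleton[of 0]
      AE_lborel_singleton[of w] AE_lborel_singleton[of "1/3"]
  proof eventually_elim
    case (elim e)
    then show ?case
      using assms by (auto simp: fiber_mass_def spread_def indicator_def split: abs_split)
  qed
  then have "(\<integral>\<^sup>+e. ennreal (fiber_mass (spread w e)) \<partial>lborel)
      = (\<integral>\<^sup>+e. ?left e \<partial>lborel) + (\<integral>\<^sup>+e. ?middle e \<partial>lborel) + (\<integral>\<^sup>+e. ?right e \<partial>lborel)"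
    by (simp add: nn_integral_cong_AE nn_integral_add)
  also have "(\<integral>\<^sup>+e. ?left e \<partial>lborel) = ennreal (27/4 * (1/9 - w\<^sup>2))"
    using assms
    by (subst nn_integral_FTC_Icc[where F = "\<lambda>e. 27/2 * (w * e - e\<^sup>2 / 2)"])
       (auto intro!: derivative_eq_intros arg_cong[where f = ennreal] simp: field_simps power2_eq_square)
  also have "(\<integral>\<^sup>+e. ?middle e \<partial>lborel) = ennreal (27/2 * w\<^sup>2)"
    using assms by (simp add: nn_integral_cmult_indicator ennreal_mult'[symmetric] power2_eq_square)
  also have "(\<integral>\<^sup>+e. ?right e \<partial>lborel) = ennreal (27/4 * (1/9 - w\<^sup>2))"
    using assms
    by (subst nn_integral_FTC_Icc[where F = "\<lambda>e. 27/4 * e\<^sup>2"])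
       (auto intro!: derivative_eq_intros arg_cong[where f = ennreal] simp: field_simps power2_eq_square)
  also have "ennreal (27/4 * (1/9 - w\<^sup>2)) + ennreal (27/2 * w\<^sup>2) + ennreal (27/4 * (1/9 - w\<^sup>2))
      = ennreal (3/2)"
  proof -
    have "w\<^sup>2 \<le> 1/9"
      using assms power_mono[of w "1/3" 2] by (simp add: power_divide)
    then show ?thesis
      by (simp add: ennreal_plus[symmetric] del: ennreal_plus) (simp add: field_simps)
  qed
  finally show ?thesis .
qed

lemma spread_shift: "spread d (min 0 d + e) = spread \<bar>d\<bar> e"
  by (auto simp: spread_def split: abs_split)

lemma spread_ge: "spread d e \<ge> 2 * \<bar>d\<bar>"
  by (auto simp: spread_def split: abs_split)

lemma nn_integral_spread:
  "(\<integral>\<^sup>+e. ennreal (fiber_mass (spread d e)) \<partial>lborel)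
     = ennreal (3/2 * indicator {-1/3<..<1/3} d)"
proof (cases "\<bar>d\<bar> < 1/3")
  case True
  have "(\<integral>\<^sup>+e. ennreal (fiber_mass (spread d e)) \<partial>lborel)
      = (\<integral>\<^sup>+e. ennreal (fiber_mass (spread d (min 0 d + e))) \<partial>lborel)"
    by (subst nn_integral_real_affine[where c = 1 and t = "min 0 d"]) auto
  also have "\<dots> = (\<integral>\<^sup>+e. ennreal (fiber_mass (spread \<bar>d\<bar> e)) \<partial>lborel)"
    by (simp only: spread_shift)
  also have "\<dots> = ennreal (3/2)"
    using True by (intro nn_integral_spread_nonneg) auto
  finally show ?thesis
    using True by (auto simp: indicator_def)
next
  case False
  then have "fiber_mass (spread d e) = 0" for e
    using spread_ge[of d e] by (simp add: fiber_mass_def)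
  then show ?thesis
    using False by (auto simp: indicator_def)
qed

lemma measurable_from_borel_prod3:
  fixes f :: "'a::second_countable_topology \<times> 'b::second_countable_topology \<times> 'c::second_countable_topology \<Rightarrow> 'd"
  shows "f \<in> borel \<Otimes>\<^sub>M borel \<Otimes>\<^sub>M borel \<rightarrow>\<^sub>M N \<Longrightarrow> f \<in> borel \<rightarrow>\<^sub>M N"
  by (simp add: borel_prod)

lemma h_dens_triple_measurable[measurable]:
  "(\<lambda>(x, y, z). ennreal (h_dens x y z)) \<in> (borel :: (real \<times> real \<times> real) measure) \<rightarrow>\<^sub>M borel"
  by (rule measurable_from_borel_prod3) measurable

lemma rotate3_measurable[measurable]:
  "(\<lambda>(x, y, z). (y, z, x)) \<in> (borel :: (real \<times> real \<times> real) measure) \<rightarrow>\<^sub>M borel"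
  by (rule measurable_from_borel_prod3) (simp add: borel_prod[symmetric])

lemma nn_integral_lborel_pair:
  fixes F :: "'a::euclidean_space \<times> 'b::euclidean_space \<Rightarrow> ennreal"
  assumes [measurable]: "F \<in> borel_measurable borel"
  shows "(\<integral>\<^sup>+p. F p \<partial>lborel) = (\<integral>\<^sup>+x. \<integral>\<^sup>+y. F (x, y) \<partial>lborel \<partial>lborel)"
proof -
  have "(\<integral>\<^sup>+p. F p \<partial>lborel) = (\<integral>\<^sup>+p. F p \<partial>(lborel \<Otimes>\<^sub>M lborel))"
    by (simp only: lborel_prod)
  also have "\<dots> = (\<integral>\<^sup>+x. \<integral>\<^sup>+y. F (x, y) \<partial>lborel \<partial>lborel)"
    by (rule lborel.nn_integral_fst[symmetric]) (simp add: lborel_prod)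
  finally show ?thesis .
qed

lemma nn_integral_lborel_triple:
  fixes F :: "real \<times> real \<times> real \<Rightarrow> ennreal"
  assumes [measurable]: "F \<in> borel_measurable borel"
  shows "(\<integral>\<^sup>+p. F p \<partial>lborel) = (\<integral>\<^sup>+x. \<integral>\<^sup>+y. \<integral>\<^sup>+z. F (x, y, z) \<partial>lborel \<partial>lborel \<partial>lborel)"
  by (simp add: nn_integral_lborel_pair)

lemma nn_integral_lborel_shift:
  fixes f :: "real \<Rightarrow> ennreal"
  assumes "f \<in> borel_measurable borel"
  shows "(\<integral>\<^sup>+x. f x \<partial>lborel) = (\<integral>\<^sup>+x. f (t + x) \<partial>lborel)"
  using nn_integral_real_affine[OF assms, of 1 t] by simp

lemma nn_integral_h_dens_diff:
  assumes [measurable]: "G \<in> borel_measurable borel"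
  shows "(\<integral>\<^sup>+p. (case p of (x, y, z) \<Rightarrow> G (x - y) * ennreal (h_dens x y z)) \<partial>lborel)
       = (\<integral>\<^sup>+d. G d * ennreal (3/2 * indicator {-1/3<..<1/3} d) \<partial>lborel)"
proof -
  have [measurable]: "(\<lambda>(x, y, z). G (x - y) * ennreal (h_dens x y z)) \<in> borel_measurable borel"
    by (rule measurable_from_borel_prod3) measurable
  have "(\<integral>\<^sup>+p. (case p of (x, y, z) \<Rightarrow> G (x - y) * ennreal (h_dens x y z)) \<partial>lborel)
      = (\<integral>\<^sup>+x. \<integral>\<^sup>+y. \<integral>\<^sup>+z. G (x - y) * ennreal (h_dens x y z) \<partial>lborel \<partial>lborel \<partial>lborel)"
    by (simp add: nn_integral_lborel_triple)
  also have "\<dots> = (\<integral>\<^sup>+y. \<integral>\<^sup>+x. \<integral>\<^sup>+z. G (x - y) * ennreal (h_dens x y z) \<partial>lborel \<partial>lborel \<partial>lborel)"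
    by (rule lborel_pair.Fubini'[symmetric]) measurable
  also have "\<dots> = (\<integral>\<^sup>+y. \<integral>\<^sup>+d1. \<integral>\<^sup>+d2. G d1 * ennreal (h_dens (y + d1) y (y + d2)) \<partial>lborel \<partial>lborel \<partial>lborel)"
  proof (rule nn_integral_cong)
    fix y :: real
    have "(\<integral>\<^sup>+x. \<integral>\<^sup>+z. G (x - y) * ennreal (h_dens x y z) \<partial>lborel \<partial>lborel)
        = (\<integral>\<^sup>+d1. \<integral>\<^sup>+z. G (y + d1 - y) * ennreal (h_dens (y + d1) y z) \<partial>lborel \<partial>lborel)"
      by (rule nn_integral_lborel_shift) measurable
    also have "\<dots> = (\<integral>\<^sup>+d1. \<integral>\<^sup>+d2. G d1 * ennreal (h_dens (y + d1) y (y + d2)) \<partial>lborel \<partial>lborel)"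
      by (rule nn_integral_cong, subst nn_integral_lborel_shift[where t = y]) auto
    finally show "(\<integral>\<^sup>+x. \<integral>\<^sup>+z. G (x - y) * ennreal (h_dens x y z) \<partial>lborel \<partial>lborel)
        = (\<integral>\<^sup>+d1. \<integral>\<^sup>+d2. G d1 * ennreal (h_dens (y + d1) y (y + d2)) \<partial>lborel \<partial>lborel)" .
  qed
  also have "\<dots> = (\<integral>\<^sup>+d1. \<integral>\<^sup>+d2. \<integral>\<^sup>+y. G d1 * ennreal (h_dens (y + d1) y (y + d2)) \<partial>lborel \<partial>lborel \<partial>lborel)"
    by (subst lborel_pair.Fubini', measurable, intro nn_integral_cong lborel_pair.Fubini') measurable
  also have "\<dots> = (\<integral>\<^sup>+d1. G d1 * \<integral>\<^sup>+d2. \<integral>\<^sup>+y. ennreal (h_dens (y + d1) y (y + d2)) \<partial>lborel \<partial>lborel \<partial>lborel)"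
    by (simp add: nn_integral_cmult)
  also have "\<dots> = (\<integral>\<^sup>+d. G d * ennreal (3/2 * indicator {-1/3<..<1/3} d) \<partial>lborel)"
    by (simp only: nn_integral_h_dens_line nn_integral_spread)
  finally show ?thesis .
qed

lemma distr_H_dist_diff: "distr H_dist borel (\<lambda>(x, y, z). x - y) = uniform_measure lborel {-1/3..1/3}"
proof (rule measure_eqI)
  fix B assume "B \<in> sets (distr H_dist borel (\<lambda>(x, y, z). x - y))"
  then have B[measurable]: "B \<in> sets borel"
    by simp
  have diff_measurable[measurable]: "(\<lambda>(x, y, z :: real). x - y :: real) \<in> borel_measurable borel"
    by (rule measurable_from_borel_prod3) measurable
  have [measurable]: "(\<lambda>(x, y, z :: real). x - y) -` B \<in> sets borel"
    using measurable_sets_borel[OF diff_measurable B] .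
  have "emeasure (distr H_dist borel (\<lambda>(x, y, z). x - y)) B
      = (\<integral>\<^sup>+p. (case p of (x, y, z) \<Rightarrow> indicator B (x - y) * ennreal (h_dens x y z)) \<partial>lborel)"
    unfolding H_dist_def
    by (subst emeasure_distr, simp_all, subst emeasure_density)
       (auto intro!: nn_integral_cong simp: indicator_def split: prod.splits)
  also have "\<dots> = (\<integral>\<^sup>+d. indicator B d * ennreal (3/2 * indicator {-1/3<..<1/3} d) \<partial>lborel)"
    by (rule nn_integral_h_dens_diff) measurable
  also have "\<dots> = (\<integral>\<^sup>+d. indicator {-1/3..1/3} d / emeasure lborel {-1/3..1/3 :: real} * indicator B d \<partial>lborel)"
    using AE_lborel_singleton[of "1/3 :: real"] AE_lborel_singleton[of "-1/3 :: real"]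
    by (intro nn_integral_cong_AE, eventually_elim)
       (auto simp: indicator_def divide_ennreal ennreal_1[symmetric] mult.commute simp del: ennreal_1)
  also have "\<dots> = emeasure (uniform_measure lborel {-1/3..1/3}) B"
    unfolding uniform_measure_def by (simp add: emeasure_density)
  finally show "emeasure (distr H_dist borel (\<lambda>(x, y, z). x - y)) B = emeasure (uniform_measure lborel {-1/3..1/3}) B" .
qed (simp add: H_dist_def)

lemma nn_integral_lborel_rotate3:
  fixes F :: "real \<times> real \<times> real \<Rightarrow> ennreal"
  assumes [measurable]: "F \<in> borel_measurable borel"
  shows "(\<integral>\<^sup>+p. F (case p of (x, y, z) \<Rightarrow> (y, z, x)) \<partial>lborel) = (\<integral>\<^sup>+p. F p \<partial>lborel)"
proof -
  have [measurable]: "F \<in> borel_measurable (borel \<Otimes>\<^sub>M borel \<Otimes>\<^sub>M borel)"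
    by (simp add: borel_prod)
  have [measurable]: "(\<lambda>p. F (case p of (x, y, z) \<Rightarrow> (y, z, x))) \<in> borel_measurable borel"
    by (rule measurable_from_borel_prod3) measurable
  have "(\<integral>\<^sup>+p. F (case p of (x, y, z) \<Rightarrow> (y, z, x)) \<partial>lborel)
      = (\<integral>\<^sup>+x. \<integral>\<^sup>+y. \<integral>\<^sup>+z. F (y, z, x) \<partial>lborel \<partial>lborel \<partial>lborel)"
    by (simp add: nn_integral_lborel_triple)
  also have "\<dots> = (\<integral>\<^sup>+y. \<integral>\<^sup>+x. \<integral>\<^sup>+z. F (y, z, x) \<partial>lborel \<partial>lborel \<partial>lborel)"
    by (rule lborel_pair.Fubini'[symmetric]) measurable
  also have "\<dots> = (\<integral>\<^sup>+y. \<integral>\<^sup>+z. \<integral>\<^sup>+x. F (y, z, x) \<partial>lborel \<partial>lborel \<partial>lborel)"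
    by (intro nn_integral_cong lborel_pair.Fubini'[symmetric]) measurable
  also have "\<dots> = (\<integral>\<^sup>+p. F p \<partial>lborel)"
    by (simp add: nn_integral_lborel_triple)
  finally show ?thesis .
qed

lemma h_dens_rotate: "h_dens y z x = h_dens x y z"
  unfolding h_dens_def by (auto simp: add_ac)

lemma distr_H_dist_rotate3: "distr H_dist borel (\<lambda>(x, y, z). (y, z, x)) = H_dist"
proof (rule measure_eqI)
  fix A assume "A \<in> sets (distr H_dist borel (\<lambda>(x, y, z). (y, z, x)))"
  then have A[measurable]: "A \<in> sets borel"
    by simp
  have "emeasure (distr H_dist borel (\<lambda>(x, y, z). (y, z, x))) A
      = (\<integral>\<^sup>+p. (case p of (x, y, z) \<Rightarrow> ennreal (h_dens x y z) * indicator A (y, z, x)) \<partial>lborel)"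
    unfolding H_dist_def
    by (subst emeasure_distr, simp_all, subst emeasure_density)
       (auto intro!: measurable_sets_borel[OF rotate3_measurable A] nn_integral_cong
             simp: indicator_def split: prod.splits)
  also have "\<dots> = (\<integral>\<^sup>+p. (\<lambda>(x, y, z). ennreal (h_dens x y z) * indicator A (x, y, z)) (case p of (x, y, z) \<Rightarrow> (y, z, x)) \<partial>lborel)"
    by (intro nn_integral_cong) (auto simp: h_dens_rotate split: prod.splits)
  also have "\<dots> = (\<integral>\<^sup>+p. (case p of (x, y, z) \<Rightarrow> ennreal (h_dens x y z)) * indicator A p \<partial>lborel)"
    by (subst nn_integral_lborel_rotate3) (auto intro!: measurable_from_borel_prod3 nn_integral_cong)
  also have "\<dots> = emeasure H_dist A"
    unfolding H_dist_def by (simp add: emeasure_density)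
  finally show "emeasure (distr H_dist borel (\<lambda>(x, y, z). (y, z, x))) A = emeasure H_dist A" .
qed (simp add: H_dist_def)

lemma distr_H_dist_cyclic_diff:
  assumes "D \<in> {\<lambda>(x, y, z). x - y, \<lambda>(x, y, z). y - z, \<lambda>(x, y, z). z - x}"
  shows "distr H_dist borel D = uniform_measure lborel {-1/3..1/3}"
proof -
  let ?rotate = "\<lambda>(x, y, z :: real). (y :: real, z, x :: real)"
  have rotate_invariant: "distr H_dist borel (\<lambda>p. f (?rotate p)) = distr H_dist borel f"
    if [measurable]: "f \<in> borel_measurable borel" for f :: "real \<times> real \<times> real \<Rightarrow> real"
  proof -
    have "distr H_dist borel (\<lambda>p. f (?rotate p)) = distr (distr H_dist borel ?rotate) borel f"
      by (subst distr_distr) (auto simp: H_dist_def comp_def)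
    then show ?thesis
      by (simp only: distr_H_dist_rotate3)
  qed
  let ?diff = "\<lambda>(x, y, z :: real). x - y :: real"
  have [measurable]: "?diff \<in> borel_measurable borel"
    by (rule measurable_from_borel_prod3) measurable
  have diff_rotate: "distr H_dist borel (\<lambda>p. ?diff (?rotate p)) = distr H_dist borel ?diff"
    by (rule rotate_invariant) measurable
  have "distr H_dist borel (\<lambda>p. ?diff (?rotate (?rotate p))) = distr H_dist borel ?diff"
    using rotate_invariant[of "\<lambda>p. ?diff (?rotate p)"] diff_rotate by simp
  moreover have "(\<lambda>(x, y, z). y - z) = (\<lambda>p. ?diff (?rotate p))"
    and "(\<lambda>(x, y, z). z - x) = (\<lambda>p. ?diff (?rotate (?rotate p)))"
    by auto
  ultimately show ?thesis
    using assms distr_H_dist_diff diff_rotate by auto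
qed

lemma sum_if_le_split:
  fixes u v :: "'a::comm_semiring_1"
  shows "(\<Sum>i=1..a+b. if i \<le> a then u else v) = of_nat a * u + of_nat b * v"
proof -
  have "(\<Sum>i=1..a+b. if i \<le> a then u else v)
      = (\<Sum>i=1..a. if i \<le> a then u else v) + (\<Sum>i=a+1..a+b. if i \<le> a then u else v)"
    by (rule sum.ub_add_nat) simp
  also have "\<dots> = (\<Sum>i=1..a. u) + (\<Sum>i=a+1..a+b. v)"
    by (intro arg_cong2[where f = "(+)"] sum.cong) auto
  finally show ?thesis
    by simp
qed

lemma bseq_even:
  assumes "n = 2 * m"
  shows "bseq n t p i = (if i \<le> m then t else 2 / real n - t)"
  using assms by (cases p) (simp add: bseq_def Let_def)

lemma bseq_odd:
  assumes "n = 2 * k + 3"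
  shows "bseq n t (x, y, z) i =
    (if i \<le> k then t
     else if i \<le> 2 * k then 2 / real n - t
     else if i = 2 * k + 1 then 3 / real n * (x - y + 1/3)
     else if i = 2 * k + 2 then 3 / real n * (y - z + 1/3)
     else 3 / real n * (z - x + 1/3))"
proof -
  have "n div 2 = k + 1" "odd n"
    using assms by auto
  then show ?thesis
    using assms by (simp add: bseq_def Let_def)
qed

lemma bseq_sum:
  assumes "n \<ge> 2"
  shows "(\<Sum>i=1..n. bseq n t p i) = 1"
proof (cases "even n")
  case True
  then obtain m where m: "n = 2 * m"
    by blast
  have range: "{1..n} = {1..m + m}"
    using m by simp
  have "(\<Sum>i=1..n. bseq n t p i) = (\<Sum>i=1..n. if i \<le> m then t else 2 / real n - t)"
    by (simp add: bseq_even[OF m])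
  also have "\<dots> = real m * t + real m * (2 / real n - t)"
    unfolding range by (rule sum_if_le_split)
  also have "\<dots> = 1"
    using m assms by (simp add: field_simps)
  finally show ?thesis .
next
  case False
  define k where "k = n div 2 - 1"
  have k: "n = 2 * k + 3"
    unfolding k_def using False assms by presburger
  have range: "{1..n} = {1..k + k + 3}"
    using k by simp
  obtain x y z where p: "p = (x, y, z)"
    by (cases p)
  have "(\<Sum>i=1..n. bseq n t p i) = (\<Sum>i=1..k+k. bseq n t p i) + (\<Sum>i=k+k+1..k+k+3. bseq n t p i)"
    unfolding range by (rule sum.ub_add_nat) simp
  also have "(\<Sum>i=1..k+k. bseq n t p i) = (\<Sum>i=1..k+k. if i \<le> k then t else 2 / real n - t)"
    by (rule sum.cong) (auto simp: p bseq_odd[OF k])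
  also have "\<dots> = real k * t + real k * (2 / real n - t)"
    by (rule sum_if_le_split)
  also have "(\<Sum>i=k+k+1..k+k+3. bseq n t p i)
      = bseq n t p (2 * k + 1) + bseq n t p (2 * k + 2) + bseq n t p (2 * k + 3)"
    by (simp add: numeral_3_eq_3 mult_2)
  also have "\<dots> = 3 / real n * (x - y + 1/3) + 3 / real n * (y - z + 1/3) + 3 / real n * (z - x + 1/3)"
    by (simp add: p bseq_odd[OF k])
  also have "\<dots> = 3 / real n"
    by (simp add: algebra_simps)
  also have "real k * t + real k * (2 / real n - t) + 3 / real n = (2 * real k + 3) / real n"
    by (simp add: algebra_simps add_divide_distrib)
  also have "\<dots> = 1"
    using k by simp
  finally show ?thesis .
qed

lemma bseq_cases:
  assumes "n \<ge> 2"
  obtains "\<And>t p. bseq n t p i = t"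
    | "\<And>t p. bseq n t p i = 2 / real n - t"
    | D where "odd n" and "D \<in> {\<lambda>(x, y, z). x - y, \<lambda>(x, y, z). y - z, \<lambda>(x, y, z). z - x}"
        and "\<And>t p. bseq n t p i = 3 / real n * (D p + 1/3)"
proof (cases "even n")
  case True
  then obtain m where "n = 2 * m"
    by blast
  then show ?thesis
    using that(1,2) by (cases "i \<le> m") (simp_all add: bseq_even)
next
  case False
  define k where "k = n div 2 - 1"
  have k: "n = 2 * k + 3"
    unfolding k_def using False assms by presburger
  consider "i \<le> 2 * k" | "i = 2 * k + 1" | "i = 2 * k + 2" | "i > 2 * k + 2"
    by linarith
  then show ?thesis
  proof cases
    case 1
    then show ?thesis
      using that(1,2) by (cases "i \<le> k") (auto simp: bseq_odd[OF k] split: prod.splits)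
  next
    case 2
    then show ?thesis
      using False by (intro that(3)[of "\<lambda>(x, y, z). x - y"]) (auto simp: bseq_odd[OF k] split: prod.splits)
  next
    case 3
    then show ?thesis
      using False by (intro that(3)[of "\<lambda>(x, y, z). y - z"]) (auto simp: bseq_odd[OF k] split: prod.splits)
  next
    case 4
    then show ?thesis
      using False by (intro that(3)[of "\<lambda>(x, y, z). z - x"]) (auto simp: bseq_odd[OF k] split: prod.splits)
  qed
qed

lemma distr_compose:
  assumes "X \<in> M \<rightarrow>\<^sub>M N" and "f \<in> N \<rightarrow>\<^sub>M L" and "distr M N X = K"
  shows "distr M L (\<lambda>\<omega>. f (X \<omega>)) = distr K L f"
  using distr_distr[OF assms(2,1)] assms(3) by (simp add: comp_def)

lemma distr_H_dist_scaled_cyclic_diff: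
  assumes "n > 0" and D: "D \<in> {\<lambda>(x, y, z). x - y, \<lambda>(x, y, z). y - z, \<lambda>(x, y, z). z - x}"
  shows "distr H_dist borel (\<lambda>p. 3 / real n * (D p + 1/3)) = F2 n"
proof -
  have [measurable]: "D \<in> borel_measurable borel"
    using D by (auto intro!: measurable_from_borel_prod3)
  have "distr H_dist borel (\<lambda>p. 3 / real n * (D p + 1/3))
      = distr (uniform_measure lborel {-1/3..1/3}) borel (\<lambda>u. 3 / real n * (u + 1/3))"
    by (rule distr_compose[OF _ _ distr_H_dist_cyclic_diff[OF D]]) (auto simp: H_dist_def)
  then show ?thesis
    using F2_eq_distr_uniform_measure[OF assms(1)] by simp
qed

theorem lemma2p4:
  fixes M :: "'a measure" and n :: nat
    and T :: "'a \<Rightarrow> real" and P :: "'a \<Rightarrow> real \<times> real \<times> real"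
  assumes "prob_space M"
    and "n \<ge> 2"
    and "T \<in> borel_measurable M"
    and "distr M borel T = F2 n"
    and "odd n \<Longrightarrow> P \<in> borel_measurable M"
    and "odd n \<Longrightarrow> distr M borel P = H_dist"
    and "odd n \<Longrightarrow> distr M (borel \<Otimes>\<^sub>M borel) (\<lambda>\<omega>. (T \<omega>, P \<omega>)) = F2 n \<Otimes>\<^sub>M H_dist"
  shows "(\<forall>\<omega>\<in>space M. (\<Sum>i=1..n. bseq n (T \<omega>) (P \<omega>) i) = 1) \<and>
         (\<forall>i\<in>{1..n}. distr M borel (\<lambda>\<omega>. bseq n (T \<omega>) (P \<omega>) i) = F2 n)"
proof -
  \<comment> \<open>Only the marginal laws of T and P enter.\<close>
  have n: "n > 0"
    using assms(2) by simp
  have "distr M borel (\<lambda>\<omega>. bseq n (T \<omega>) (P \<omega>) i) = F2 n" for i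
  proof (cases rule: bseq_cases[OF assms(2), of i])
    case 1
    then show ?thesis
      using assms(4) by simp
  next
    case 2
    have "distr M borel (\<lambda>\<omega>. 2 / real n - T \<omega>) = distr (F2 n) borel (\<lambda>t. 2 / real n - t)"
      by (rule distr_compose[OF assms(3) _ assms(4)]) measurable
    then show ?thesis
      using 2 F2_reflect[OF n] by simp
  next
    case (3 D)
    then have [measurable]: "D \<in> borel_measurable borel"
      by (auto intro!: measurable_from_borel_prod3)
    have "distr M borel (\<lambda>\<omega>. 3 / real n * (D (P \<omega>) + 1/3))
        = distr H_dist borel (\<lambda>p. 3 / real n * (D p + 1/3))"
      using 3(1) assms(5,6) by (intro distr_compose) auto
    then show ?thesis
      using 3 distr_H_dist_scaled_cyclic_diff[OF n] by simp
  qed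
  then show ?thesis
    using bseq_sum[OF assms(2)] by simp
qed

end
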